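(* Let $X$ be a real separable Hilbert space and $A\in\mathcal L(X)$ monotone, i.e. $\langle Ax,x\rangle\ge0$ for all $x\in X$. Consider the linear equations $Ax=y$ with $y=Ax^\dagger$, $x^\dagger\in X$. (a) These equations are locally well-posed at every $x^\dagger\in X$ if and only if $A$ is continuously invertible, i.e. $A$ is bijective with $A^{-1}\in\mathcal L(X)$; in this case $\|(A+\alpha I)^{-1}\|\le \|A^{-1}\|$ for all $\alpha>0$. (b) These equations are locally ill-posed at every $x^\dagger\in X$ if and only if $\mathcal N(A)\neq\{0\}$ or the range $\mathcal R(A)$ is not closed; in this case $\|(A+\alpha I)^{-1}\|=\frac1\alpha$ for all $\alpha>0$. Exactly one of the cases (a), (b) occurs.
   Context: $\mathcal L(X)$ denotes the Banach space of bounded linear operators $X\to X$ with operator norm. $\mathcal N(A)$ is the null space and $\mathcal R(A)$ the range of $A$. For a monotone $A\in\mathcal L(X)$ and $\alpha>0$, $A+\alpha I$ is boundedly invertible. The equation $Ax=y$ with $y=Ax^\dagger$ is called locally well-posed at $x^\dagger$ if there is $r>0$ such that for every sequence $(x_k)$ in the closed ball of radius $r$ around $x^\dagger$, $\|Ax_k-Ax^\dagger\|\to0$ implies $\|x_k-x^\dagger\|\to0$; otherwise it is locally ill-posed at $x^\dagger$. *)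

theory Defs
  imports "HOL-Analysis.Analysis"
begin

definition monotone_op :: "('a::real_inner \<Rightarrow> 'a) \<Rightarrow> bool" where
  "monotone_op A \<longleftrightarrow> (\<forall>x. inner (A x) x \<ge> 0)"

definition locally_well_posed :: "('a::real_normed_vector \<Rightarrow> 'a) \<Rightarrow> 'a \<Rightarrow> bool" where
  "locally_well_posed A xd \<longleftrightarrow>
     (\<exists>r>0. \<forall>xs::nat \<Rightarrow> 'a. (\<forall>k. xs k \<in> cball xd r) \<longrightarrow>
        (\<lambda>k. norm (A (xs k) - A xd)) \<longlonglongrightarrow> 0 \<longrightarrow>
        (\<lambda>k. norm (xs k - xd)) \<longlonglongrightarrow> 0)"

definition locally_ill_posed :: "('a::real_normed_vector \<Rightarrow> 'a) \<Rightarrow> 'a \<Rightarrow> bool" where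
  "locally_ill_posed A xd \<longleftrightarrow> \<not> locally_well_posed A xd"

definition continuously_invertible :: "('a::real_normed_vector \<Rightarrow> 'a) \<Rightarrow> bool" where
  "continuously_invertible A \<longleftrightarrow> bij A \<and> bounded_linear (inv A)"

end

theory Submission
  imports Defs
begin

text \<open>
  For a bounded linear \<open>A\<close> both well-posedness notions are global: the equation is locally
  well-posed at some (equivalently every) point iff \<open>A\<close> is bounded below,
  \<open>c \<parallel>x\<parallel> \<le> \<parallel>A x\<parallel>\<close>, since otherwise unit vectors \<open>u k\<close> with \<open>A (u k) \<rightarrow> 0\<close> give the
  non-converging sequence \<open>x\<^sup>\<dagger> + r u k\<close>. By the bounded inverse theorem (Baire category plus
  an iterative correction series) being bounded below means being injective with closed range.

  Monotonicity gives \<open>\<parallel>A x + \<alpha> x\<parallel>\<^sup>2 \<ge> \<parallel>A x\<parallel>\<^sup>2 + \<alpha>\<^sup>2 \<parallel>x\<parallel>\<^sup>2\<close>. Hence \<open>A + \<alpha> I\<close> is coercive and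
  onto (Lax--Milgram via Banach's fixed point theorem) with \<open>\<parallel>(A + \<alpha> I)\<inverse>\<parallel> \<le> 1/\<alpha>\<close>, and also
  \<open>\<parallel>(A + \<alpha> I)\<inverse>\<parallel> \<le> \<parallel>A\<inverse>\<parallel>\<close> when \<open>A\<close> is invertible. A monotone \<open>A\<close> that is bounded below is onto,
  because the solutions of \<open>A x + \<alpha> x = y\<close> stay bounded as \<open>\<alpha> \<rightarrow> 0\<close> and \<open>range A\<close> is closed.
  Finally, if \<open>\<parallel>(A + \<alpha> I)\<inverse>\<parallel> = N < 1/\<alpha>\<close> then \<open>\<parallel>x\<parallel> \<le> N (\<parallel>A x\<parallel> + \<alpha> \<parallel>x\<parallel>)\<close> would make \<open>A\<close>
  bounded below.
\<close>

definition bounded_below :: "('a::real_normed_vector \<Rightarrow> 'b::real_normed_vector) \<Rightarrow> bool" where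
  "bounded_below A \<longleftrightarrow> (\<exists>c>0. \<forall>x. c * norm x \<le> norm (A x))"

lemma not_bounded_below_obtains_null_sequence:
  fixes A :: "'a::real_normed_vector \<Rightarrow> 'b::real_normed_vector"
  assumes lin: "linear A" and "\<not> bounded_below A"
  obtains u where "\<And>k. norm (u k) = 1" and "(\<lambda>k. A (u k)) \<longlonglongrightarrow> 0"
proof -
  have "\<exists>x. norm (A x) < inverse (real (Suc k)) * norm x" for k
    using \<open>\<not> bounded_below A\<close> unfolding bounded_below_def
    by (metis inverse_positive_iff_positive not_le of_nat_0_less_iff zero_less_Suc)
  then obtain x where x: "\<And>k. norm (A (x k)) < inverse (real (Suc k)) * norm (x k)"
    by metis
  then have nz: "x k \<noteq> 0" for k
    by (metis mult_zero_right norm_ge_zero norm_zero not_less)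
  define u where "u k = inverse (norm (x k)) *\<^sub>R x k" for k
  have Au: "norm (A (u k)) < inverse (real (Suc k))" for k
    using x[of k] nz[of k] by (simp add: u_def linear_scale[OF lin] field_simps)
  show thesis
  proof
    show "norm (u k) = 1" for k using nz[of k] by (simp add: u_def)
    show "(\<lambda>k. A (u k)) \<longlonglongrightarrow> 0"
      by (rule Lim_null_comparison[OF always_eventually LIMSEQ_inverse_real_of_nat])
        (use Au less_imp_le in auto)
  qed
qed

lemma locally_well_posed_iff_bounded_below:
  fixes A :: "'a::real_normed_vector \<Rightarrow> 'a"
  assumes bl: "bounded_linear A"
  shows "locally_well_posed A xd \<longleftrightarrow> bounded_below A"
proof
  assume "locally_well_posed A xd"
  then obtain r where r: "r > 0" and wp: "\<And>xs::nat \<Rightarrow> 'a. (\<forall>k. xs k \<in> cball xd r) \<Longrightarrow>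
      (\<lambda>k. norm (A (xs k) - A xd)) \<longlonglongrightarrow> 0 \<Longrightarrow> (\<lambda>k. norm (xs k - xd)) \<longlonglongrightarrow> 0"
    unfolding locally_well_posed_def by blast
  have lin: "linear A" using bl by (rule bounded_linear.linear)
  show "bounded_below A"
  proof (rule ccontr)
    assume "\<not> bounded_below A"
    then obtain u where u: "\<And>k. norm (u k) = 1" and Au: "(\<lambda>k. A (u k)) \<longlonglongrightarrow> 0"
      using not_bounded_below_obtains_null_sequence lin by blast
    define xs where "xs k = xd + r *\<^sub>R u k" for k
    have "(\<lambda>k. norm (xs k - xd)) \<longlonglongrightarrow> 0"
    proof (rule wp)
      show "\<forall>k. xs k \<in> cball xd r" using u r by (simp add: xs_def dist_norm)
      have "(\<lambda>k. r *\<^sub>R A (u k)) \<longlonglongrightarrow> 0"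
        using tendsto_scaleR[OF tendsto_const Au] by simp
      then show "(\<lambda>k. norm (A (xs k) - A xd)) \<longlonglongrightarrow> 0"
        by (auto simp: xs_def linear_add[OF lin] linear_scale[OF lin] dest: tendsto_norm_zero)
    qed
    moreover have "norm (xs k - xd) = r" for k using u r by (simp add: xs_def)
    ultimately show False using r by (simp add: LIMSEQ_const_iff)
  qed
next
  assume "bounded_below A"
  then obtain c where c: "c > 0" "\<And>x. c * norm x \<le> norm (A x)"
    unfolding bounded_below_def by blast
  have "(\<lambda>k. norm (xs k - xd)) \<longlonglongrightarrow> 0"
    if "(\<lambda>k. norm (A (xs k) - A xd)) \<longlonglongrightarrow> 0" for xs
  proof (rule Lim_null_comparison[OF always_eventually])
    show "(\<lambda>k. norm (A (xs k) - A xd) / c) \<longlonglongrightarrow> 0"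
      using tendsto_divide_zero[OF that] .
    show "\<forall>k. norm (norm (xs k - xd)) \<le> norm (A (xs k) - A xd) / c"
      using c by (simp add: pos_le_divide_eq mult.commute flip: linear_diff[OF bounded_linear.linear[OF bl]])
  qed
  then show "locally_well_posed A xd"
    unfolding locally_well_posed_def using zero_less_one by blast
qed

lemma bounded_below_imp_inj:
  assumes "linear A" and "bounded_below A"
  shows "inj A"
proof -
  obtain c where "c > 0" "\<And>x. c * norm x \<le> norm (A x)"
    using \<open>bounded_below A\<close> unfolding bounded_below_def by blast
  then have "A x = 0 \<Longrightarrow> x = 0" for x
    by (metis mult_le_0_iff norm_le_zero_iff norm_zero not_le)
  then show ?thesis using linear_injective_0[OF \<open>linear A\<close>] by blast
qed

lemma bounded_below_imp_closed_range:
  fixes A :: "'a::{real_normed_vector,complete_space} \<Rightarrow> 'b::real_normed_vector"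
  assumes "bounded_linear A" and "bounded_below A"
  shows "closed (range A)"
proof -
  obtain c where "c > 0" "\<And>x. c * norm x \<le> norm (A x)"
    using \<open>bounded_below A\<close> unfolding bounded_below_def by blast
  then have "complete (range A)"
    using complete_isometric_image[of c UNIV A] assms(1) complete_UNIV by simp
  then show ?thesis by (rule complete_imp_closed)
qed

lemma bounded_linear_inv_if_bounded_below:
  fixes T :: "'a::real_normed_vector \<Rightarrow> 'b::real_normed_vector"
  assumes "linear T" and "bij T" and "c > 0" and lower: "\<And>x. c * norm x \<le> norm (T x)"
  shows "bounded_linear (inv T)" and "onorm (inv T) \<le> 1 / c"
proof -
  have bound: "norm (inv T y) \<le> 1 / c * norm y" for y
    using lower[of "inv T y"] \<open>c > 0\<close> \<open>bij T\<close>
    by (simp add: bij_is_surj surj_f_inv_f field_simps)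
  have inv_T: "inv T y = x \<longleftrightarrow> T x = y" for x y
    using \<open>bij T\<close> by (metis bij_inv_eq_iff)
  show "bounded_linear (inv T)"
  proof (rule bounded_linear_intro[of _ "1 / c"])
    show "inv T (x + y) = inv T x + inv T y" for x y
      by (simp add: inv_T linear_add[OF \<open>linear T\<close>]) (metis inv_T)
    show "inv T (r *\<^sub>R x) = r *\<^sub>R inv T x" for r x
      by (simp add: inv_T linear_scale[OF \<open>linear T\<close>]) (metis inv_T)
    show "norm (inv T x) \<le> norm x * (1 / c)" for x
      using bound[of x] by (simp add: mult.commute)
  qed
  show "onorm (inv T) \<le> 1 / c"
    using bound \<open>c > 0\<close> by (intro onorm_bound) auto
qed

lemma monotone_op_norm_add_scaleR_sq:
  fixes A :: "'a::real_inner \<Rightarrow> 'a"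
  assumes "monotone_op A" and "\<alpha> \<ge> 0"
  shows "(norm (A x))\<^sup>2 + \<alpha>\<^sup>2 * (norm x)\<^sup>2 \<le> (norm (A x + \<alpha> *\<^sub>R x))\<^sup>2"
proof -
  have "(norm (A x + \<alpha> *\<^sub>R x))\<^sup>2 = (norm (A x))\<^sup>2 + 2 * \<alpha> * inner (A x) x + \<alpha>\<^sup>2 * (norm x)\<^sup>2"
    using dot_norm[of "A x" "\<alpha> *\<^sub>R x"] by (simp add: power_mult_distrib)
  moreover have "inner (A x) x \<ge> 0"
    using \<open>monotone_op A\<close> unfolding monotone_op_def by blast
  ultimately show ?thesis using \<open>\<alpha> \<ge> 0\<close> by simp
qed

lemma monotone_op_norm_le_add_scaleR:
  fixes A :: "'a::real_inner \<Rightarrow> 'a"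
  assumes "monotone_op A" and "\<alpha> \<ge> 0"
  shows "norm (A x) \<le> norm (A x + \<alpha> *\<^sub>R x)"
    and "\<alpha> * norm x \<le> norm (A x + \<alpha> *\<^sub>R x)"
proof -
  have sq: "(norm (A x))\<^sup>2 + (\<alpha> * norm x)\<^sup>2 \<le> (norm (A x + \<alpha> *\<^sub>R x))\<^sup>2"
    using monotone_op_norm_add_scaleR_sq[OF assms, of x] by (simp only: power_mult_distrib)
  have "0 \<le> (\<alpha> * norm x)\<^sup>2" "0 \<le> (norm (A x))\<^sup>2" by simp_all
  then have "(norm (A x))\<^sup>2 \<le> (norm (A x + \<alpha> *\<^sub>R x))\<^sup>2" "(\<alpha> * norm x)\<^sup>2 \<le> (norm (A x + \<alpha> *\<^sub>R x))\<^sup>2"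
    using sq by linarith+
  then show "norm (A x) \<le> norm (A x + \<alpha> *\<^sub>R x)" "\<alpha> * norm x \<le> norm (A x + \<alpha> *\<^sub>R x)"
    by (auto elim: power2_le_imp_le)
qed

lemma coercive_imp_surj:
  fixes T :: "'a::{real_inner,complete_space} \<Rightarrow> 'a"
  assumes "bounded_linear T" and "\<alpha> > 0" and coercive: "\<And>x. \<alpha> * (norm x)\<^sup>2 \<le> inner (T x) x"
  shows "surj T"
proof -
  obtain K0 where K0: "\<And>x. norm (T x) \<le> norm x * K0"
    using bounded_linear.bounded[OF \<open>bounded_linear T\<close>] by blast
  define K where "K = max K0 \<alpha>"
  have K: "norm (T x) \<le> K * norm x" for x
    using K0[of x] by (metis K_def max.cobounded1 mult.commute mult_left_mono norm_ge_zero order_trans)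
  have "K > 0" "\<alpha> \<le> K" using \<open>\<alpha> > 0\<close> by (auto simp: K_def)
  define t where "t = \<alpha> / K\<^sup>2"
  define q where "q = sqrt (1 - \<alpha>\<^sup>2 / K\<^sup>2)"
  have "\<alpha>\<^sup>2 / K\<^sup>2 \<le> 1"
    using \<open>\<alpha> > 0\<close> \<open>\<alpha> \<le> K\<close> by (simp add: power_mono)
  then have q: "0 \<le> q" "q < 1" using \<open>\<alpha> > 0\<close> \<open>K > 0\<close> by (auto simp: q_def)
  \<comment> \<open>The step \<open>t\<close> is chosen so that \<open>1 - 2 t \<alpha> + t\<^sup>2 K\<^sup>2 = 1 - \<alpha>\<^sup>2 / K\<^sup>2\<close>.\<close>
  have contraction: "norm (u - t *\<^sub>R T u) \<le> q * norm u" for u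
  proof (rule power2_le_imp_le)
    have "(norm (u - t *\<^sub>R T u))\<^sup>2 = (norm u)\<^sup>2 - 2 * (t * inner (T u) u) + t\<^sup>2 * (norm (T u))\<^sup>2"
      unfolding power2_norm_eq_inner
      by (simp add: inner_diff_left inner_diff_right inner_commute power2_eq_square)
    also have "\<dots> \<le> (norm u)\<^sup>2 - 2 * (t * (\<alpha> * (norm u)\<^sup>2)) + t\<^sup>2 * (K * norm u)\<^sup>2"
      using coercive[of u] K[of u] \<open>\<alpha> > 0\<close> \<open>K > 0\<close>
      by (intro add_mono diff_mono mult_left_mono power_mono) (auto simp: t_def)
    also have "\<dots> = (q * norm u)\<^sup>2"
      using \<open>K > 0\<close> \<open>\<alpha>\<^sup>2 / K\<^sup>2 \<le> 1\<close>
      by (simp add: q_def t_def power_mult_distrib field_simps power2_eq_square)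
    finally show "(norm (u - t *\<^sub>R T u))\<^sup>2 \<le> (q * norm u)\<^sup>2" .
    show "0 \<le> q * norm u" using q by simp
  qed
  have "y \<in> range T" for y
  proof -
    define f where "f x = x - t *\<^sub>R (T x - y)" for x
    have "dist (f x) (f x') \<le> q * dist x x'" for x x'
      using contraction[of "x - x'"]
      by (simp add: f_def dist_norm linear_diff[OF bounded_linear.linear[OF \<open>bounded_linear T\<close>]]
          algebra_simps)
    then obtain x where "f x = x" using banach_fix_type[OF q] by blast
    then have "T x = y" using \<open>\<alpha> > 0\<close> \<open>K > 0\<close> by (simp add: f_def t_def)
    then show ?thesis by blast
  qed
  then show ?thesis by blast
qed

lemma monotone_op_resolvent:
  fixes A :: "'a::{real_inner,complete_space} \<Rightarrow> 'a"
  assumes "bounded_linear A" and "monotone_op A" and "\<alpha> > 0"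
  shows "bij (\<lambda>x. A x + \<alpha> *\<^sub>R x)" and "bounded_linear (inv (\<lambda>x. A x + \<alpha> *\<^sub>R x))"
    and "onorm (inv (\<lambda>x. A x + \<alpha> *\<^sub>R x)) \<le> 1 / \<alpha>"
proof -
  define B where "B = (\<lambda>x. A x + \<alpha> *\<^sub>R x)"
  have "bounded_linear B"
    unfolding B_def using \<open>bounded_linear A\<close>
    by (intro bounded_linear_add bounded_linear_scaleR_right bounded_linear_ident)
  then have "linear B" by (rule bounded_linear.linear)
  have lower: "\<alpha> * norm x \<le> norm (B x)" for x
    unfolding B_def using monotone_op_norm_le_add_scaleR(2)[OF \<open>monotone_op A\<close>, of \<alpha> x] \<open>\<alpha> > 0\<close>
    by simp
  have "\<alpha> * (norm x)\<^sup>2 \<le> inner (B x) x" for x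
    using \<open>monotone_op A\<close> unfolding B_def monotone_op_def
    by (simp add: inner_add_left flip: power2_norm_eq_inner)
  then have "surj B" by (rule coercive_imp_surj[OF \<open>bounded_linear B\<close> \<open>\<alpha> > 0\<close>])
  have "bounded_below B"
    unfolding bounded_below_def using \<open>\<alpha> > 0\<close> lower by blast
  then have "inj B" by (rule bounded_below_imp_inj[OF \<open>linear B\<close>])
  with \<open>surj B\<close> have "bij B" by (simp add: bij_def)
  then show "bij (\<lambda>x. A x + \<alpha> *\<^sub>R x)" "bounded_linear (inv (\<lambda>x. A x + \<alpha> *\<^sub>R x))"
    "onorm (inv (\<lambda>x. A x + \<alpha> *\<^sub>R x)) \<le> 1 / \<alpha>"
    using bounded_linear_inv_if_bounded_below[OF \<open>linear B\<close> _ \<open>\<alpha> > 0\<close> lower]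
    unfolding B_def by blast+
qed

lemma bounded_below_monotone_op_imp_surj:
  fixes A :: "'a::{real_inner,complete_space} \<Rightarrow> 'a"
  assumes "bounded_linear A" and "monotone_op A" and "bounded_below A"
  shows "surj A"
proof -
  obtain c where "c > 0" and lower: "\<And>x. c * norm x \<le> norm (A x)"
    using \<open>bounded_below A\<close> unfolding bounded_below_def by blast
  have "y \<in> range A" for y
  proof -
    define \<epsilon> where "\<epsilon> n = inverse (real (Suc n))" for n
    have "\<epsilon> n > 0" for n by (simp add: \<epsilon>_def)
    then have "y \<in> range (\<lambda>x. A x + \<epsilon> n *\<^sub>R x)" for n
      using monotone_op_resolvent(1)[OF assms(1,2)] by (simp add: bij_is_surj)
    then have "\<forall>n. \<exists>z. A z + \<epsilon> n *\<^sub>R z = y" by (metis (no_types, lifting) imageE)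
    then obtain x where x: "\<And>n. A (x n) + \<epsilon> n *\<^sub>R x n = y" by metis
    \<comment> \<open>The solutions stay bounded, \<open>c \<parallel>x n\<parallel> \<le> \<parallel>A (x n)\<parallel> \<le> \<parallel>y\<parallel>\<close>, so \<open>\<epsilon> n x n \<rightarrow> 0\<close>.\<close>
    have "c * norm (x n) \<le> norm y" for n
      using lower[of "x n"] monotone_op_norm_le_add_scaleR(1)[OF \<open>monotone_op A\<close>, of "\<epsilon> n" "x n"]
        \<open>\<epsilon> n > 0\<close> x[of n] by simp
    then have "norm (x n) \<le> norm y / c" for n
      using \<open>c > 0\<close> by (simp add: pos_le_divide_eq mult.commute)
    then have "\<forall>n. norm (\<epsilon> n *\<^sub>R x n) \<le> norm y / c * \<epsilon> n"
      using \<open>\<And>n. \<epsilon> n > 0\<close> by (metis abs_of_pos mult.commute mult_left_mono norm_scaleR order_less_imp_le)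
    moreover have "(\<lambda>n. norm y / c * \<epsilon> n) \<longlonglongrightarrow> 0"
      unfolding \<epsilon>_def by (rule tendsto_mult_right_zero[OF LIMSEQ_inverse_real_of_nat])
    ultimately have "(\<lambda>n. \<epsilon> n *\<^sub>R x n) \<longlonglongrightarrow> 0"
      by (rule Lim_null_comparison[OF always_eventually])
    then have "(\<lambda>n. y - \<epsilon> n *\<^sub>R x n) \<longlonglongrightarrow> y"
      using tendsto_diff[OF tendsto_const[of y]] by fastforce
    moreover have "y - \<epsilon> n *\<^sub>R x n = A (x n)" for n
      using x[of n] by (simp add: algebra_simps)
    ultimately have "(\<lambda>n. A (x n)) \<longlonglongrightarrow> y" by simp
    moreover have "closed (range A)"
      by (rule bounded_below_imp_closed_range[OF assms(1,3)])
    ultimately show ?thesis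
      by (meson closed_sequentially rangeI)
  qed
  then show ?thesis by blast
qed

lemma closed_range_ball_in_closure_image_cball:
  fixes A :: "'a::real_normed_vector \<Rightarrow> 'b::complete_space"
  assumes "closed (range A)"
  obtains n :: nat and y0 \<delta> where "\<delta> > 0" and "y0 \<in> range A"
    and "\<And>y. y \<in> range A \<Longrightarrow> dist y0 y < \<delta> \<Longrightarrow> y \<in> closure (A ` cball 0 (real n))"
proof -
  define X where "X = top_of_set (range A)"
  define C where "C n = closure (A ` cball 0 (real n))" for n :: nat
  have "completely_metrizable_space X"
    unfolding X_def using \<open>closed (range A)\<close>
    by (intro completely_metrizable_space_closedin completely_metrizable_space_euclidean) simp
  have C_range: "C n \<subseteq> range A" for n
    unfolding C_def by (rule closure_minimal[OF _ \<open>closed (range A)\<close>]) auto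
  then have "closedin X (C n)" for n
    unfolding X_def C_def by (simp add: closed_subset)
  have "\<Union> (range C) = range A"
  proof
    show "range A \<subseteq> \<Union> (range C)"
    proof
      fix y assume "y \<in> range A"
      then obtain x where "y = A x" by blast
      moreover obtain n :: nat where "norm x \<le> real n" using real_arch_simple by blast
      ultimately have "y \<in> C n" unfolding C_def by (intro closure_subset[THEN subsetD]) auto
      then show "y \<in> \<Union> (range C)" by blast
    qed
  qed (use C_range in blast)
  then have "X interior_of \<Union> (range C) \<noteq> {}"
    by (metis X_def empty_iff interior_of_topspace rangeI topspace_euclidean_subtopology)
  moreover have "countable (range C)" by simp
  ultimately have "\<exists>n. X interior_of C n \<noteq> {}"
    using Baire_category_alt[of X "range C"] \<open>completely_metrizable_space X\<close> \<open>\<And>n. closedin X (C n)\<close>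
    by blast
  then obtain n y0 where "y0 \<in> X interior_of C n" by blast
  then obtain U where "open U" "y0 \<in> range A \<inter> U" "range A \<inter> U \<subseteq> C n"
    unfolding interior_of_def X_def openin_open by blast
  moreover obtain \<delta> where "\<delta> > 0" "ball y0 \<delta> \<subseteq> U"
    using \<open>open U\<close> \<open>y0 \<in> range A \<inter> U\<close> open_contains_ball by blast
  ultimately show thesis
    by (intro that[of \<delta> y0 n]) (auto simp: C_def subset_iff)
qed

lemma closed_range_approximate_preimage:
  fixes A :: "'a::real_normed_vector \<Rightarrow> 'b::{real_normed_vector,complete_space}"
  assumes "linear A" and "closed (range A)"
  obtains M where "M \<ge> 0"
    and "\<And>z e. z \<in> range A \<Longrightarrow> e > 0 \<Longrightarrow> \<exists>x. norm x \<le> M * norm z \<and> norm (A x - z) < e"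
proof -
  obtain \<delta> y0 and n :: nat where "\<delta> > 0" and "y0 \<in> range A"
    and dense: "\<And>y. y \<in> range A \<Longrightarrow> dist y0 y < \<delta> \<Longrightarrow> y \<in> closure (A ` cball 0 (real n))"
    by (rule closed_range_ball_in_closure_image_cball[OF \<open>closed (range A)\<close>]) (rule that)
  \<comment> \<open>Approximate \<open>y0 + z\<close> and \<open>y0\<close> from \<open>A ` cball 0 n\<close> and subtract.\<close>
  have small: "\<exists>x. norm x \<le> 2 * real n \<and> norm (A x - z) < e"
    if "z \<in> range A" "norm z < \<delta>" "e > 0" for z e
  proof -
    have "y0 + z \<in> range A"
      using \<open>y0 \<in> range A\<close> \<open>z \<in> range A\<close> by (auto simp flip: linear_add[OF \<open>linear A\<close>])
    then have "y0 + z \<in> closure (A ` cball 0 (real n))"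
      using \<open>norm z < \<delta>\<close> by (intro dense) (auto simp: dist_norm)
    then obtain x1 where x1: "norm x1 \<le> real n" "dist (A x1) (y0 + z) < e / 2"
      using \<open>e > 0\<close> unfolding closure_approachable by (auto dest!: spec[of _ "e / 2"])
    have "y0 \<in> closure (A ` cball 0 (real n))"
      using \<open>y0 \<in> range A\<close> \<open>\<delta> > 0\<close> by (intro dense) auto
    then obtain x2 where x2: "norm x2 \<le> real n" "dist (A x2) y0 < e / 2"
      using \<open>e > 0\<close> unfolding closure_approachable by (auto dest!: spec[of _ "e / 2"])
    have "A (x1 - x2) - z = (A x1 - (y0 + z)) - (A x2 - y0)"
      by (simp add: linear_diff[OF \<open>linear A\<close>])
    then have "norm (A (x1 - x2) - z) \<le> dist (A x1) (y0 + z) + dist (A x2) y0"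
      by (metis dist_norm norm_triangle_ineq4)
    then have "norm (A (x1 - x2) - z) < e"
      using x1(2) x2(2) by linarith
    moreover have "norm (x1 - x2) \<le> 2 * real n"
      using x1(1) x2(1) norm_triangle_ineq4[of x1 x2] by linarith
    ultimately show ?thesis by blast
  qed
  define M where "M = 4 * real n / \<delta>"
  show thesis
  proof (rule that[of M])
    show "M \<ge> 0" using \<open>\<delta> > 0\<close> by (simp add: M_def)
    fix z e assume "z \<in> range A" and "(e::real) > 0"
    show "\<exists>x. norm x \<le> M * norm z \<and> norm (A x - z) < e"
    proof (cases "z = 0")
      case True
      then show ?thesis using \<open>e > 0\<close> linear_0[OF \<open>linear A\<close>] by (intro exI[of _ 0]) simp
    next
      case False
      define s where "s = \<delta> / (2 * norm z)"
      have "s > 0" using False \<open>\<delta> > 0\<close> by (simp add: s_def)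
      have "s *\<^sub>R z \<in> range A"
        using \<open>z \<in> range A\<close> by (auto simp flip: linear_scale[OF \<open>linear A\<close>])
      moreover have "norm (s *\<^sub>R z) < \<delta>"
        using False \<open>\<delta> > 0\<close> \<open>s > 0\<close> by (simp add: s_def)
      ultimately obtain x where x: "norm x \<le> 2 * real n" "norm (A x - s *\<^sub>R z) < s * e"
        using small \<open>s > 0\<close> \<open>e > 0\<close> by (meson mult_pos_pos)
      have "A (x /\<^sub>R s) - z = (A x - s *\<^sub>R z) /\<^sub>R s"
        using \<open>s > 0\<close> by (simp add: linear_scale[OF \<open>linear A\<close>] algebra_simps)
      then have "norm (A (x /\<^sub>R s) - z) = norm (A x - s *\<^sub>R z) / s"
        using \<open>s > 0\<close> by (simp add: divide_inverse_commute)
      also have "\<dots> < e"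
        using x(2) \<open>s > 0\<close> by (simp add: pos_divide_less_eq mult.commute)
      finally have "norm (A (x /\<^sub>R s) - z) < e" .
      moreover have "norm (x /\<^sub>R s) \<le> M * norm z"
        using x(1) \<open>s > 0\<close> False \<open>\<delta> > 0\<close>
        by (simp add: s_def M_def field_simps)
      ultimately show ?thesis by blast
    qed
  qed
qed

lemma norm_le_geometric_imp_summable:
  fixes f :: "nat \<Rightarrow> 'a::{real_normed_vector,complete_space}"
  assumes f: "\<And>k. norm (f k) \<le> C * (1/2)^k"
  shows "summable f" and "norm (suminf f) \<le> 2 * C"
proof -
  have "C \<ge> 0" using order_trans[OF norm_ge_zero f[of 0]] by simp
  have "norm (sum f {a<..b}) \<le> C * (1/2)^a" for a b
  proof -
    have "norm (sum f {a<..b}) \<le> C * (\<Sum>k\<in>{Suc a..b}. (1/2)^k)"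
      by (simp add: sum_distrib_left sum_norm_le f atLeastSucAtMost_greaterThanAtMost)
    also have "\<dots> \<le> C * (1/2)^a"
      using \<open>C \<ge> 0\<close> by (intro mult_left_mono) (simp_all add: sum_gp power_decreasing)
    finally show ?thesis .
  qed
  moreover have "(\<lambda>a. C * (1/2::real)^a) \<longlonglongrightarrow> 0"
    by (intro tendsto_mult_right_zero LIMSEQ_power_zero) simp
  ultimately show "summable f"
    by (intro summable_bounded_partials[where g = "\<lambda>a. C * (1/2)^a"]) auto
  have "norm (sum f {..<n}) \<le> 2 * C" for n
  proof -
    have "norm (sum f {..<n}) \<le> C * (\<Sum>k<n. (1/2)^k)"
      by (simp add: sum_distrib_left sum_norm_le f)
    also have "\<dots> \<le> C * 2"
      using \<open>C \<ge> 0\<close> by (intro mult_left_mono) (simp_all add: sum_gp_strict)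
    finally show ?thesis by (simp add: mult.commute)
  qed
  then show "norm (suminf f) \<le> 2 * C"
    using tendsto_norm[OF summable_LIMSEQ[OF \<open>summable f\<close>]] by (intro LIMSEQ_le_const2) auto
qed

lemma approximate_preimage_imp_norm_le:
  fixes A :: "'a::{real_normed_vector,complete_space} \<Rightarrow> 'b::real_normed_vector"
  assumes "bounded_linear A" and "inj A" and "M \<ge> 0"
    and approx: "\<And>z. z \<in> range A \<Longrightarrow> \<exists>x. norm x \<le> M * norm z \<and> norm (A x - z) \<le> norm z / 2"
  shows "norm x0 \<le> 2 * (M * norm (A x0))"
proof -
  have lin: "linear A" using \<open>bounded_linear A\<close> by (rule bounded_linear.linear)
  obtain g where g: "\<And>z. z \<in> range A \<Longrightarrow> norm (g z) \<le> M * norm z \<and> norm (A (g z) - z) \<le> norm z / 2"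
    using approx by metis
  \<comment> \<open>\<open>zs k\<close> is the residual after \<open>k\<close> corrections; summing the corrections recovers \<open>x0\<close>.\<close>
  define zs where "zs k = ((\<lambda>z. z - A (g z)) ^^ k) (A x0)" for k
  have zs_Suc: "zs (Suc k) = zs k - A (g (zs k))" for k by (simp add: zs_def)
  have zs: "zs k \<in> range A \<and> norm (zs k) \<le> norm (A x0) * (1/2)^k" for k
  proof (induction k)
    case 0
    then show ?case by (simp add: zs_def)
  next
    case (Suc k)
    then have "zs (Suc k) \<in> range A"
      by (auto simp: zs_Suc simp flip: linear_diff[OF lin])
    moreover have "norm (zs (Suc k)) \<le> norm (zs k) / 2"
      using g[of "zs k"] Suc by (simp add: zs_Suc norm_minus_commute)
    ultimately show ?case using Suc by simp
  qed
  define xs where "xs k = g (zs k)" for k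
  have "norm (xs k) \<le> M * norm (A x0) * (1/2)^k" for k
  proof -
    have "norm (xs k) \<le> M * norm (zs k)" using g[of "zs k"] zs[of k] by (simp add: xs_def)
    also have "\<dots> \<le> M * (norm (A x0) * (1/2)^k)"
      using zs[of k] \<open>M \<ge> 0\<close> by (intro mult_left_mono) simp_all
    finally show ?thesis by (simp add: mult.assoc)
  qed
  note xs = norm_le_geometric_imp_summable[OF this]
  have "zs \<longlonglongrightarrow> 0"
    by (rule Lim_null_comparison[OF always_eventually, of _ "\<lambda>k. norm (A x0) * (1/2)^k"])
      (use zs in \<open>auto intro!: tendsto_mult_right_zero LIMSEQ_power_zero\<close>)
  then have "(\<lambda>k. zs k - zs (Suc k)) sums (zs 0 - 0)" by (rule telescope_sums')
  then have "(\<lambda>k. A (xs k)) sums A x0"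
    by (simp add: xs_def zs_Suc) (simp add: zs_def)
  moreover have "(\<lambda>k. A (xs k)) sums A (suminf xs)"
    using bounded_linear.sums[OF \<open>bounded_linear A\<close> summable_sums[OF xs(1)]] .
  ultimately have "suminf xs = x0"
    using \<open>inj A\<close> sums_unique2 by (metis injD)
  then show ?thesis using xs(2) by simp
qed

lemma inj_closed_range_imp_bounded_below:
  fixes A :: "'a::{real_normed_vector,complete_space} \<Rightarrow> 'b::{real_normed_vector,complete_space}"
  assumes "bounded_linear A" and "inj A" and "closed (range A)"
  shows "bounded_below A"
proof -
  have lin: "linear A" using \<open>bounded_linear A\<close> by (rule bounded_linear.linear)
  obtain M where "M \<ge> 0"
    and approx: "\<And>z e. z \<in> range A \<Longrightarrow> e > 0 \<Longrightarrow> \<exists>x. norm x \<le> M * norm z \<and> norm (A x - z) < e"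
    by (rule closed_range_approximate_preimage[OF lin \<open>closed (range A)\<close>]) (rule that)
  have "\<exists>x. norm x \<le> M * norm z \<and> norm (A x - z) \<le> norm z / 2" if "z \<in> range A" for z
  proof (cases "z = 0")
    case True
    then show ?thesis by (intro exI[of _ 0]) (simp add: linear_0[OF lin])
  next
    case False
    then show ?thesis using approx[OF that, of "norm z / 2"] by (auto intro: less_imp_le)
  qed
  then have "norm x \<le> 2 * (M * norm (A x))" for x
    by (rule approximate_preimage_imp_norm_le[OF \<open>bounded_linear A\<close> \<open>inj A\<close> \<open>M \<ge> 0\<close>])
  moreover have "(2 * M + 1) * norm (A x) = 2 * (M * norm (A x)) + norm (A x)" for x
    by (simp add: algebra_simps)
  ultimately have "norm x \<le> (2 * M + 1) * norm (A x)" for x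
    by (metis add_increasing2 norm_ge_zero)
  then have "1 / (2 * M + 1) * norm x \<le> norm (A x)" for x
    using \<open>M \<ge> 0\<close> by (simp add: field_simps)
  then show ?thesis
    unfolding bounded_below_def using \<open>M \<ge> 0\<close> by (intro exI[of _ "1 / (2 * M + 1)"]) simp
qed

lemma bounded_below_iff_inj_closed_range:
  fixes A :: "'a::{real_normed_vector,complete_space} \<Rightarrow> 'b::{real_normed_vector,complete_space}"
  assumes "bounded_linear A"
  shows "bounded_below A \<longleftrightarrow> inj A \<and> closed (range A)"
  using bounded_below_imp_inj[OF bounded_linear.linear[OF assms]]
    bounded_below_imp_closed_range[OF assms] inj_closed_range_imp_bounded_below[OF assms]
  by blast

lemma continuously_invertible_iff_bounded_below:
  fixes A :: "'a::{real_inner,complete_space} \<Rightarrow> 'a"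
  assumes "bounded_linear A" and "monotone_op A"
  shows "continuously_invertible A \<longleftrightarrow> bounded_below A"
proof
  assume "continuously_invertible A"
  then have "bij A" and "bounded_linear (inv A)"
    unfolding continuously_invertible_def by blast+
  then obtain K where "K > 0" and K: "\<And>y. norm (inv A y) \<le> norm y * K"
    using bounded_linear.pos_bounded by blast
  have "1 / K * norm x \<le> norm (A x)" for x
    using K[of "A x"] \<open>K > 0\<close> \<open>bij A\<close> by (simp add: bij_is_inj field_simps)
  then show "bounded_below A"
    unfolding bounded_below_def using \<open>K > 0\<close> by (intro exI[of _ "1 / K"]) simp
next
  assume "bounded_below A"
  then obtain c where "c > 0" and lower: "\<And>x. c * norm x \<le> norm (A x)"
    unfolding bounded_below_def by blast
  have lin: "linear A" using \<open>bounded_linear A\<close> by (rule bounded_linear.linear)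
  have "bij A"
    using bounded_below_imp_inj[OF lin \<open>bounded_below A\<close>]
      bounded_below_monotone_op_imp_surj[OF assms \<open>bounded_below A\<close>]
    by (simp add: bij_def)
  then show "continuously_invertible A"
    unfolding continuously_invertible_def
    using bounded_linear_inv_if_bounded_below(1)[OF lin _ \<open>c > 0\<close> lower] by blast
qed

lemma onorm_inv_resolvent_le:
  fixes A :: "'a::{real_inner,complete_space} \<Rightarrow> 'a"
  assumes "bounded_linear A" and "monotone_op A" and "continuously_invertible A" and "\<alpha> > 0"
  shows "onorm (inv (\<lambda>x. A x + \<alpha> *\<^sub>R x)) \<le> onorm (inv A)"
proof (rule onorm_bound)
  have "bij A" and bl_inv: "bounded_linear (inv A)"
    using \<open>continuously_invertible A\<close> unfolding continuously_invertible_def by blast+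
  show "0 \<le> onorm (inv A)" by (rule onorm_pos_le[OF bl_inv])
  fix y
  define x where "x = inv (\<lambda>x. A x + \<alpha> *\<^sub>R x) y"
  have "A x + \<alpha> *\<^sub>R x = y"
    using monotone_op_resolvent(1)[OF assms(1,2,4)] bij_inv_eq_iff x_def by metis
  then have "norm (A x) \<le> norm y"
    using monotone_op_norm_le_add_scaleR(1)[OF \<open>monotone_op A\<close>, of \<alpha> x] \<open>\<alpha> > 0\<close> by simp
  have "norm x = norm (inv A (A x))" using \<open>bij A\<close> by (simp add: bij_is_inj)
  also have "\<dots> \<le> onorm (inv A) * norm (A x)" by (rule onorm[OF bl_inv])
  also have "\<dots> \<le> onorm (inv A) * norm y"
    using \<open>norm (A x) \<le> norm y\<close> by (rule mult_left_mono) (rule onorm_pos_le[OF bl_inv])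
  finally show "norm (inv (\<lambda>x. A x + \<alpha> *\<^sub>R x) y) \<le> onorm (inv A) * norm y"
    by (simp add: x_def)
qed

lemma onorm_inv_resolvent_eq:
  fixes A :: "'a::{real_inner,complete_space} \<Rightarrow> 'a"
  assumes "bounded_linear A" and "monotone_op A" and "\<not> bounded_below A" and "\<alpha> > 0"
  shows "onorm (inv (\<lambda>x. A x + \<alpha> *\<^sub>R x)) = 1 / \<alpha>"
proof -
  define B where "B = (\<lambda>x. A x + \<alpha> *\<^sub>R x)"
  define N where "N = onorm (inv B)"
  have "bij B" and bl_inv: "bounded_linear (inv B)" and "N \<le> 1 / \<alpha>"
    using monotone_op_resolvent[OF assms(1,2,4)] by (simp_all add: B_def N_def)
  have "N \<ge> 0" unfolding N_def by (rule onorm_pos_le[OF bl_inv])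
  have "\<not> N < 1 / \<alpha>"
  proof
    assume "N < 1 / \<alpha>"
    then have "1 - N * \<alpha> > 0" using \<open>\<alpha> > 0\<close> by (simp add: field_simps)
    have "(1 - N * \<alpha>) * norm x \<le> (N + 1) * norm (A x)" for x
    proof -
      have "norm x = norm (inv B (B x))" using \<open>bij B\<close> by (simp add: bij_is_inj)
      also have "\<dots> \<le> N * norm (B x)" unfolding N_def by (rule onorm[OF bl_inv])
      also have "\<dots> \<le> N * (norm (A x) + \<alpha> * norm x)"
        using norm_triangle_ineq[of "A x" "\<alpha> *\<^sub>R x"] \<open>\<alpha> > 0\<close> \<open>N \<ge> 0\<close>
        by (intro mult_left_mono) (simp_all add: B_def)
      finally have "(1 - N * \<alpha>) * norm x \<le> N * norm (A x)" by (simp add: algebra_simps)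
      also have "\<dots> \<le> (N + 1) * norm (A x)" by (intro mult_right_mono) simp_all
      finally show ?thesis .
    qed
    then have "bounded_below A"
      unfolding bounded_below_def using \<open>1 - N * \<alpha> > 0\<close> \<open>N \<ge> 0\<close>
      by (intro exI[of _ "(1 - N * \<alpha>) / (N + 1)"]) (simp add: field_simps)
    then show False using \<open>\<not> bounded_below A\<close> by blast
  qed
  then show ?thesis using \<open>N \<le> 1 / \<alpha>\<close> by (simp add: N_def B_def)
qed

theorem proposition1p3:
  fixes A :: "'a::{real_inner, complete_space} \<Rightarrow> 'a"
  assumes "separable_space (euclidean :: 'a topology)"
    and "bounded_linear A"
    and "monotone_op A"
  shows "((\<forall>xd. locally_well_posed A xd) \<longleftrightarrow> continuously_invertible A)
    \<and> (continuously_invertible A \<longrightarrow>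
         (\<forall>\<alpha>>0. onorm (inv (\<lambda>x. A x + \<alpha> *\<^sub>R x)) \<le> onorm (inv A)))
    \<and> ((\<forall>xd. locally_ill_posed A xd) \<longleftrightarrow> ({x. A x = 0} \<noteq> {0} \<or> \<not> closed (range A)))
    \<and> (({x. A x = 0} \<noteq> {0} \<or> \<not> closed (range A)) \<longrightarrow>
         (\<forall>\<alpha>>0. onorm (inv (\<lambda>x. A x + \<alpha> *\<^sub>R x)) = 1 / \<alpha>))
    \<and> ((\<forall>xd. locally_well_posed A xd) \<longleftrightarrow> \<not> (\<forall>xd. locally_ill_posed A xd))"
proof -
  have lin: "linear A" using assms(2) by (rule bounded_linear.linear)
  have well_posed: "(\<forall>xd. locally_well_posed A xd) \<longleftrightarrow> bounded_below A"
    using locally_well_posed_iff_bounded_below[OF assms(2)] by blast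
  have ill_posed: "(\<forall>xd. locally_ill_posed A xd) \<longleftrightarrow> \<not> bounded_below A"
    using locally_well_posed_iff_bounded_below[OF assms(2)] by (simp add: locally_ill_posed_def)
  have "{x. A x = 0} = {0} \<longleftrightarrow> inj A"
    using linear_injective_0[OF lin] linear_0[OF lin] by blast
  then have degenerate: "({x. A x = 0} \<noteq> {0} \<or> \<not> closed (range A)) \<longleftrightarrow> \<not> bounded_below A"
    using bounded_below_iff_inj_closed_range[OF assms(2)] by blast
  show ?thesis
    unfolding well_posed ill_posed degenerate continuously_invertible_iff_bounded_below[OF assms(2,3)]
    using onorm_inv_resolvent_le[OF assms(2,3)] onorm_inv_resolvent_eq[OF assms(2,3)]
      continuously_invertible_iff_bounded_below[OF assms(2,3)]
    by auto
qed

end
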